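(* Let $G$ be a finite non-abelian group. Then the non-centralizer graph $\Upsilon_G$ is regular if and only if $\beta_G(x)=xZ(G)$ for all $x\in G$.
   Context: For a finite group $G$ and $x\in G$, $C_G(x)=\{y\in G\mid xy=yx\}$ and $Z(G)$ is the center of $G$. The non-centralizer graph $\Upsilon_G$ is the simple graph with vertex set $G$ in which two distinct vertices $x,y$ are adjacent if and only if $C_G(x)\neq C_G(y)$. A graph is regular if all its vertices have the same degree. For $x\in G$, $\beta_G(x)=\{y\in G\mid C_G(y)=C_G(x)\}$. *)

theory Defs
  imports "HOL-Algebra.Algebra"
begin

definition centralizer_elt :: "('a, 'b) monoid_scheme \<Rightarrow> 'a \<Rightarrow> 'a set" where
  "centralizer_elt G x = {y \<in> carrier G. x \<otimes>\<^bsub>G\<^esub> y = y \<otimes>\<^bsub>G\<^esub> x}"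

definition group_center :: "('a, 'b) monoid_scheme \<Rightarrow> 'a set" where
  "group_center G = {z \<in> carrier G. \<forall>y \<in> carrier G. z \<otimes>\<^bsub>G\<^esub> y = y \<otimes>\<^bsub>G\<^esub> z}"

definition noncentralizer_adj :: "('a, 'b) monoid_scheme \<Rightarrow> 'a \<Rightarrow> 'a \<Rightarrow> bool" where
  "noncentralizer_adj G x y \<longleftrightarrow> x \<in> carrier G \<and> y \<in> carrier G \<and> x \<noteq> y
     \<and> centralizer_elt G x \<noteq> centralizer_elt G y"

definition noncentralizer_degree :: "('a, 'b) monoid_scheme \<Rightarrow> 'a \<Rightarrow> nat" where
  "noncentralizer_degree G x = card {y \<in> carrier G. noncentralizer_adj G x y}"

definition noncentralizer_regular :: "('a, 'b) monoid_scheme \<Rightarrow> bool" where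
  "noncentralizer_regular G \<longleftrightarrow>
     (\<forall>x \<in> carrier G. \<forall>y \<in> carrier G. noncentralizer_degree G x = noncentralizer_degree G y)"

definition beta_set :: "('a, 'b) monoid_scheme \<Rightarrow> 'a \<Rightarrow> 'a set" where
  "beta_set G x = {y \<in> carrier G. centralizer_elt G y = centralizer_elt G x}"

end

theory Submission
  imports Defs
begin

text \<open>
  Two vertices are non-adjacent exactly when they lie in the same class \<open>\<beta>(x)\<close>, so
  the degree of \<open>x\<close> is \<open>|G| - |\<beta>(x)|\<close>. Multiplying by central elements does not change
  centralizers, hence \<open>xZ(G) \<subseteq> \<beta>(x)\<close>, with equality iff \<open>|\<beta>(x)| = |Z(G)|\<close>. Since
  \<open>\<beta>(1) = Z(G)\<close>, the graph is regular iff every \<open>\<beta>(x)\<close> has the size of \<open>Z(G)\<close>.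
\<close>

context group
begin

lemma centralizer_elt_mult_center:
  assumes x: "x \<in> carrier G" and z: "z \<in> group_center G"
  shows "centralizer_elt G (x \<otimes> z) = centralizer_elt G x"
proof -
  have zc: "z \<in> carrier G" and z_comm: "\<And>y. y \<in> carrier G \<Longrightarrow> z \<otimes> y = y \<otimes> z"
    using z by (auto simp: group_center_def)
  have "x \<otimes> z \<otimes> y = y \<otimes> (x \<otimes> z) \<longleftrightarrow> x \<otimes> y = y \<otimes> x" if y: "y \<in> carrier G" for y
  proof -
    have "x \<otimes> z \<otimes> y = x \<otimes> y \<otimes> z"
      using x y zc z_comm[OF y] by (metis m_assoc)
    moreover have "y \<otimes> (x \<otimes> z) = y \<otimes> x \<otimes> z"
      using x y zc by (simp add: m_assoc)
    ultimately show ?thesis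
      using right_cancel[of z "x \<otimes> y" "y \<otimes> x"] x y zc by (simp only: m_closed)
  qed
  then show ?thesis
    unfolding centralizer_elt_def by blast
qed

lemma l_coset_center_subset_beta_set:
  assumes x: "x \<in> carrier G"
  shows "x <# group_center G \<subseteq> beta_set G x"
  using x centralizer_elt_mult_center
  by (auto simp: l_coset_def beta_set_def group_center_def)

lemma card_l_coset_center:
  assumes "finite (carrier G)" and "x \<in> carrier G"
  shows "card (x <# group_center G) = card (group_center G)"
proof -
  have "x <# group_center G \<in> lcosets (group_center G)"
    using assms(2) by (auto simp: LCOSETS_def)
  then show ?thesis
    using l_card_cosets_equal assms(1) by (force simp: group_center_def)
qed

lemma centralizer_elt_eq_carrier_iff:
  assumes "y \<in> carrier G"
  shows "centralizer_elt G y = carrier G \<longleftrightarrow> y \<in> group_center G"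
  using assms unfolding centralizer_elt_def group_center_def by blast

lemma beta_set_one: "beta_set G \<one> = group_center G"
proof -
  have "centralizer_elt G \<one> = carrier G"
    by (auto simp: centralizer_elt_def)
  then show ?thesis
    using centralizer_elt_eq_carrier_iff unfolding beta_set_def group_center_def by blast
qed

lemma beta_set_eq_l_coset_center_iff_card:
  assumes fin: "finite (carrier G)" and x: "x \<in> carrier G"
  shows "beta_set G x = x <# group_center G \<longleftrightarrow> card (beta_set G x) = card (group_center G)"
proof -
  have "finite (beta_set G x)"
    using fin by (auto simp: beta_set_def)
  then show ?thesis
    using card_subset_eq l_coset_center_subset_beta_set[OF x] card_l_coset_center[OF fin x]
    by metis
qed

lemma noncentralizer_degree_eq_card_diff_beta_set:
  assumes "finite (carrier G)" and "x \<in> carrier G"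
  shows "noncentralizer_degree G x = card (carrier G) - card (beta_set G x)"
proof -
  have "{y \<in> carrier G. noncentralizer_adj G x y} = carrier G - beta_set G x"
    using assms(2) by (auto simp: noncentralizer_adj_def beta_set_def)
  moreover have "beta_set G x \<subseteq> carrier G"
    by (auto simp: beta_set_def)
  ultimately show ?thesis
    using assms(1) by (simp add: noncentralizer_degree_def card_Diff_subset finite_subset)
qed

lemma noncentralizer_regular_iff_card_beta_set:
  assumes fin: "finite (carrier G)"
  shows "noncentralizer_regular G \<longleftrightarrow>
           (\<forall>x \<in> carrier G. card (beta_set G x) = card (group_center G))"
proof -
  have card_le: "card (beta_set G x) \<le> card (carrier G)" for x
    using fin by (intro card_mono) (auto simp: beta_set_def)
  have "noncentralizer_degree G x = noncentralizer_degree G \<one> \<longleftrightarrow>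
          card (beta_set G x) = card (group_center G)" if "x \<in> carrier G" for x
    using noncentralizer_degree_eq_card_diff_beta_set[OF fin that] noncentralizer_degree_eq_card_diff_beta_set[OF fin one_closed]
      card_le[of x] card_le[of \<one>] beta_set_one
    by auto
  then show ?thesis
    unfolding noncentralizer_regular_def by (metis one_closed)
qed

end

theorem proposition2p4:
  fixes G :: "('a, 'b) monoid_scheme"
  assumes "group G" and "finite (carrier G)" and "\<not> comm_group G"
  shows "noncentralizer_regular G \<longleftrightarrow>
           (\<forall>x \<in> carrier G. beta_set G x = x <#\<^bsub>G\<^esub> group_center G)"
proof -
  interpret group G by fact
  show ?thesis
    by (simp add: noncentralizer_regular_iff_card_beta_set[OF assms(2)]
        beta_set_eq_l_coset_center_iff_card[OF assms(2)])
qed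

end
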